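(* For every $n\ge 3$, let $G_n$ be the directed graph with nodes $0,1,\dots,n-1$ and arcs $i\to i+1$ for $0\le i\le n-2$ together with $j\to 1$ for $2\le j\le n-1$. Then $R(G_n)=1$.
   Context: $d_G(x,y)$ is the shortest directed path length from $x$ to $y$ ($\infty$ if none). The distance-count matrix $C_G\in\mathbb{R}^{n\times n}$ of a graph with $n$ nodes has $(C_G)_{i,k}=|\{j: d_G(j,i)=k\}|$. For $\mathbf a\in\mathbb{R}^{\mathbb{N}}$ (with $a_0$ arbitrary) the linear centrality is $f^{\mathbf a}_G(i)=\sum_{k=0}^{n-1}(C_G)_{i,k}a_k$. A permutation $\pi$ of $\{0,\dots,n-1\}$ is representable by $G$ if there is $\mathbf a\in\mathbb{R}^{\mathbb{N}}$ such that $f^{\mathbf a}_G(\pi(0))>f^{\mathbf a}_G(\pi(1))>\dots>f^{\mathbf a}_G(\pi(n-1))$. The representativeness of $G$ is $R(G)=|\{\pi\in S_n:\pi\text{ representable by }G\}|/n!$. *)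

theory Defs
  imports "HOL-Combinatorics.Permutations" "HOL-Library.Extended_Nat"
begin

text \<open>A directed graph on nodes 0,...,n-1 is given by n and an arc relation E
  (only arcs between nodes below n are relevant; graphs below only have such arcs).\<close>

inductive walk :: "(nat \<Rightarrow> nat \<Rightarrow> bool) \<Rightarrow> nat \<Rightarrow> nat \<Rightarrow> nat \<Rightarrow> bool"
  for E where
  walk_0: "walk E 0 x x"
| walk_step: "E x y \<Longrightarrow> walk E k y z \<Longrightarrow> walk E (Suc k) x z"

definition dist_G :: "(nat \<Rightarrow> nat \<Rightarrow> bool) \<Rightarrow> nat \<Rightarrow> nat \<Rightarrow> enat" where
  "dist_G E x y = (if \<exists>k. walk E k x y then enat (LEAST k. walk E k x y) else \<infinity>)"

definition dist_count :: "nat \<Rightarrow> (nat \<Rightarrow> nat \<Rightarrow> bool) \<Rightarrow> nat \<Rightarrow> nat \<Rightarrow> nat" where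
  "dist_count n E i k = card {j \<in> {0..<n}. dist_G E j i = enat k}"

definition lin_centrality :: "nat \<Rightarrow> (nat \<Rightarrow> nat \<Rightarrow> bool) \<Rightarrow> (nat \<Rightarrow> real) \<Rightarrow> nat \<Rightarrow> real" where
  "lin_centrality n E a i = (\<Sum>k<n. real (dist_count n E i k) * a k)"

definition representable :: "nat \<Rightarrow> (nat \<Rightarrow> nat \<Rightarrow> bool) \<Rightarrow> (nat \<Rightarrow> nat) \<Rightarrow> bool" where
  "representable n E \<pi> \<longleftrightarrow>
     (\<exists>a :: nat \<Rightarrow> real. \<forall>m. m + 1 < n \<longrightarrow>
        lin_centrality n E a (\<pi> m) > lin_centrality n E a (\<pi> (m + 1)))"

definition representativeness :: "nat \<Rightarrow> (nat \<Rightarrow> nat \<Rightarrow> bool) \<Rightarrow> real" where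
  "representativeness n E =
     real (card {\<pi>. \<pi> permutes {0..<n} \<and> representable n E \<pi>}) / real (fact n)"

definition G_arc :: "nat \<Rightarrow> nat \<Rightarrow> nat \<Rightarrow> bool" where
  "G_arc n i j \<longleftrightarrow> (i + 2 \<le> n \<and> j = i + 1) \<or> (2 \<le> i \<and> i \<le> n - 1 \<and> j = 1)"

end

theory Submission
  imports Defs
begin

text \<open>Node 0 is reached only from itself, and a node \<open>i \<ge> 1\<close> is at distance \<open>i - j\<close>
  from \<open>j \<le> i\<close> and at distance \<open>i\<close> from \<open>j > i\<close> (through the arc back to 1). Hence
  \<open>f(0) = a\<^sub>0\<close> and \<open>f(i) = a\<^sub>0 + \<dots> + a\<^sub>i\<^sub>-\<^sub>1 + (n - i) a\<^sub>i\<close>: a triangular linear system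
  with nonzero diagonal. So every vector of centralities is attained, in particular one
  ordered according to any given permutation.\<close>

lemma dist_G_eqI:
  assumes "walk E d x y" and "\<And>k. walk E k x y \<Longrightarrow> d \<le> k"
  shows "dist_G E x y = enat d"
proof -
  have "(LEAST k. walk E k x y) = d"
    using assms by (intro Least_equality) auto
  then show ?thesis
    using assms(1) unfolding dist_G_def by auto
qed

lemma real_dist_count_mult:
  "real (dist_count n E i k) * c = (\<Sum>j<n. if dist_G E j i = enat k then c else 0)"
proof -
  have "real (dist_count n E i k) * c = (\<Sum>j\<in>{j\<in>{..<n}. dist_G E j i = enat k}. c)"
    by (simp add: dist_count_def atLeast0LessThan)
  also have "\<dots> = (\<Sum>j<n. if dist_G E j i = enat k then c else 0)"
    by (rule sum.inter_filter) simp
  finally show ?thesis .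
qed

lemma lin_centrality_eq_sum_sources:
  "lin_centrality n E a i = (\<Sum>j<n. \<Sum>k<n. if dist_G E j i = enat k then a k else 0)"
  unfolding lin_centrality_def real_dist_count_mult by (rule sum.swap)

lemma walk_G_arc_to_0:
  assumes "walk (G_arc n) k x 0"
  shows "x = 0"
  using assms by (induction k x "0::nat" rule: walk.induct) (auto simp: G_arc_def)

lemma dist_G_arc_to_0:
  "dist_G (G_arc n) x 0 = (if x = 0 then 0 else \<infinity>)"
proof (cases "x = 0")
  case True
  then have "dist_G (G_arc n) x 0 = enat 0"
    by (intro dist_G_eqI) (auto intro: walk_0)
  then show ?thesis
    using True by (simp add: zero_enat_def)
next
  case False
  then show ?thesis
    using walk_G_arc_to_0 unfolding dist_G_def by auto
qed

text \<open>The distance from \<open>x\<close> to \<open>y\<close> in \<open>G\<^sub>n\<close>, valid only for \<open>y \<ge> 1\<close>.\<close>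

definition G_arc_dist :: "nat \<Rightarrow> nat \<Rightarrow> nat" where
  "G_arc_dist x y = (if x \<le> y then y - x else y)"

lemma walk_G_arc_length_ge:
  assumes "walk (G_arc n) k x y" and "1 \<le> y"
  shows "G_arc_dist x y \<le> k"
  using assms
  by (induction k x y rule: walk.induct) (auto simp: G_arc_def G_arc_dist_def split: if_splits)

lemma walk_G_arc_forward:
  assumes "x \<le> y" and "y < n"
  shows "walk (G_arc n) (y - x) x y"
  using assms
proof (induction "y - x" arbitrary: x)
  case 0
  then show ?case by (simp add: walk_0)
next
  case (Suc d)
  have "G_arc n x (Suc x)"
    using Suc by (auto simp: G_arc_def)
  moreover have "walk (G_arc n) (y - Suc x) (Suc x) y"
    using Suc by simp
  ultimately have "walk (G_arc n) (Suc (y - Suc x)) x y"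
    by (rule walk_step)
  then show ?case
    using Suc by (simp add: Suc_diff_Suc)
qed

lemma walk_G_arc_dist:
  assumes "x < n" and "1 \<le> y" and "y < n"
  shows "walk (G_arc n) (G_arc_dist x y) x y"
proof (cases "x \<le> y")
  case True
  then show ?thesis
    using walk_G_arc_forward assms by (simp add: G_arc_dist_def)
next
  case False
  then have "G_arc n x 1"
    using assms by (simp add: G_arc_def)
  moreover have "walk (G_arc n) (y - 1) 1 y"
    using walk_G_arc_forward assms by simp
  ultimately have "walk (G_arc n) (Suc (y - 1)) x y"
    by (rule walk_step)
  then show ?thesis
    using False assms by (simp add: G_arc_dist_def)
qed

lemma dist_G_arc:
  assumes "x < n" and "1 \<le> y" and "y < n"
  shows "dist_G (G_arc n) x y = enat (G_arc_dist x y)"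
  using assms walk_G_arc_dist walk_G_arc_length_ge by (intro dist_G_eqI) auto

lemma lin_centrality_G_arc_0:
  assumes "0 < n"
  shows "lin_centrality n (G_arc n) a 0 = a 0"
proof -
  have "lin_centrality n (G_arc n) a 0 = (\<Sum>j<n. if j = 0 then a 0 else 0)"
    unfolding lin_centrality_eq_sum_sources dist_G_arc_to_0
    using assms by (intro sum.cong) (auto simp: zero_enat_def)
  then show ?thesis
    using assms by simp
qed

lemma lin_centrality_G_arc:
  assumes "1 \<le> i" and "i < n"
  shows "lin_centrality n (G_arc n) a i = (\<Sum>k<i. a k) + real (n - i) * a i"
proof -
  have "lin_centrality n (G_arc n) a i = (\<Sum>j<n. a (G_arc_dist j i))"
    unfolding lin_centrality_eq_sum_sources
    using assms dist_G_arc by (intro sum.cong) (auto simp: G_arc_dist_def)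
  also have "\<dots> = (\<Sum>j<Suc i. a (G_arc_dist j i)) + (\<Sum>j\<in>{Suc i..<n}. a (G_arc_dist j i))"
    using assms by (subst sum.union_disjoint[symmetric]) (auto intro: sum.cong)
  also have "(\<Sum>j<Suc i. a (G_arc_dist j i)) = (\<Sum>j<Suc i. a (Suc i - Suc j))"
    by (intro sum.cong) (auto simp: G_arc_dist_def)
  also have "\<dots> = (\<Sum>k<Suc i. a k)"
    by (rule sum.nat_diff_reindex)
  also have "(\<Sum>j\<in>{Suc i..<n}. a (G_arc_dist j i)) = real (n - Suc i) * a i"
    by (simp add: G_arc_dist_def)
  finally show ?thesis
    using assms by (simp add: of_nat_diff algebra_simps del: of_nat_diff_if)
qed

text \<open>Prefix sums \<open>a\<^sub>0 + \<dots> + a\<^sub>i\<^sub>-\<^sub>1\<close> of the weights solving the triangular system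
  \<open>f(i) = t i\<close> by forward substitution.\<close>

primrec G_arc_prefix_sum :: "nat \<Rightarrow> (nat \<Rightarrow> real) \<Rightarrow> nat \<Rightarrow> real" where
  "G_arc_prefix_sum n t 0 = 0"
| "G_arc_prefix_sum n t (Suc i) = G_arc_prefix_sum n t i +
     (if i = 0 then t 0 else (t i - G_arc_prefix_sum n t i) / real (n - i))"

lemma lin_centrality_G_arc_prefix_sum_weights:
  assumes "i < n"
  shows "lin_centrality n (G_arc n) (\<lambda>k. G_arc_prefix_sum n t (Suc k) - G_arc_prefix_sum n t k) i
    = t i"
proof (cases "i = 0")
  case True
  then show ?thesis
    using assms lin_centrality_G_arc_0 by simp
next
  case False
  let ?S = "G_arc_prefix_sum n t"
  have "(\<Sum>k<i. ?S (Suc k) - ?S k) = ?S i"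
    by (simp add: sum_lessThan_telescope del: G_arc_prefix_sum.simps(2))
  moreover have "real (n - i) \<noteq> 0"
    using assms by simp
  ultimately show ?thesis
    using False assms lin_centrality_G_arc by simp
qed

lemma lin_centrality_G_arc_surj: "\<exists>a. \<forall>i<n. lin_centrality n (G_arc n) a i = t i"
  using lin_centrality_G_arc_prefix_sum_weights by blast

lemma representable_if_lin_centrality_surj:
  assumes "\<And>t. \<exists>a. \<forall>i<n. lin_centrality n E a i = t i" and "\<pi> permutes {0..<n}"
  shows "representable n E \<pi>"
proof -
  obtain a where a: "\<forall>i<n. lin_centrality n E a i = - real (inv \<pi> i)"
    using assms(1)[of "\<lambda>i. - real (inv \<pi> i)"] by blast
  have centrality_\<pi>: "lin_centrality n E a (\<pi> m) = - real m" if "m < n" for m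
  proof -
    have "\<pi> m < n"
      using that permutes_in_image[OF assms(2)] by simp
    then show ?thesis
      using a permutes_inverses(2)[OF assms(2)] by simp
  qed
  show ?thesis
    unfolding representable_def
  proof (intro exI allI impI)
    fix m
    assume "m + 1 < n"
    then show "lin_centrality n E a (\<pi> (m + 1)) < lin_centrality n E a (\<pi> m)"
      using centrality_\<pi> by simp
  qed
qed

lemma representativeness_eq_1:
  assumes "\<And>\<pi>. \<pi> permutes {0..<n} \<Longrightarrow> representable n E \<pi>"
  shows "representativeness n E = 1"
proof -
  have "{\<pi>. \<pi> permutes {0..<n} \<and> representable n E \<pi>} = {\<pi>. \<pi> permutes {0..<n}}"
    using assms by blast
  then have "card {\<pi>. \<pi> permutes {0..<n} \<and> representable n E \<pi>} = fact n"
    using card_permutations[of "{0..<n}" n] by simp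
  then show ?thesis
    unfolding representativeness_def by simp
qed

theorem theorem5:
  fixes n :: nat
  assumes "n \<ge> 3"
  shows "representativeness n (G_arc n) = 1"
  by (intro representativeness_eq_1 representable_if_lin_centrality_surj lin_centrality_G_arc_surj)

end
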